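(* Let $\mathcal{A}$ be a finite alphabet, $N$ a finite set of integers and $f:\mathcal{A}^{|N|}\to\mathcal{A}$ an irreducible local rule. (i) If $N$ is reflection-symmetrical or $\widehat{r\nu}f=f$ for some $\nu\in S_{\mathcal{A}}$, then the $\mathcal{T}_{\mathcal{A}}$-equivalence class of $\Phi^N_f$ is \[[\Phi^N_f]=\{\Phi^M_g\mid M\cong N,\ g\in[f]\}.\] (ii) Otherwise $N$ and $[f]$ induce the following two (distinct) equivalence classes of $\mathcal{C}_{\mathcal{A}}/\mathcal{T}_{\mathcal{A}}$: \[[\Phi^N_f]=\{\Phi^{d+N}_{\hat\nu f},\ \Phi^{d-N}_{\widehat{r\nu}f}\mid d\in\mathbb{Z},\ \nu\in S_{\mathcal{A}}\},\qquad [\Phi^N_{\hat rf}]=\{\Phi^{d+N}_{\widehat{r\nu}f},\ \Phi^{d-N}_{\hat\nu f}\mid d\in\mathbb{Z},\ \nu\in S_{\mathcal{A}}\}.\]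
   Context: For finite $N=\{j_1<\dots<j_n\}\subset\mathbb{Z}$ and $f:\mathcal{A}^n\to\mathcal{A}$, $\Phi^N_f(x)_i=f(x_{i+j_1}\dots x_{i+j_n})$. A local rule is irreducible if it depends on every argument (for each index some change of only that input letter changes the output). $S_{\mathcal{A}}$ is the group of permutations of $\mathcal{A}$. Rule operators: $\hat\nu f(w)=\nu f(\nu^{-1}w)$ (letterwise), $\hat r f(w)=f(rw)$ where $r(a_1\dots a_n)=a_n\dots a_1$, and $\widehat{r\nu}=\hat r\hat\nu$; $[f]=\{\hat\alpha f\mid \alpha\in\{1,r\}\times S_{\mathcal{A}}\}$. $\mathcal{C}_{\mathcal{A}}$ is the set of all CA global maps on $\mathcal{A}^{\mathbb{Z}}$. Operators on global maps: $\sigma\Phi=\sigma\circ\Phi$ with $(\sigma x)_i=x_{i+1}$; $\hat\nu\Phi(x)=\nu\Phi(\nu^{-1}x)$ (cellwise); $\hat r\Phi(x)=r\Phi(rx)$ with $(rx)_i=x_{-i}$. $\mathcal{T}_{\mathcal{A}}=\{\sigma^i\hat r^j\hat\nu\mid i\in\mathbb{Z},j\in\{0,1\},\nu\in S_{\mathcal{A}}\}$ is the group they generate, acting on $\mathcal{C}_{\mathcal{A}}$; $[\Phi]$ denotes the orbit of $\Phi$. For sets of integers, $d+N=\{d+i\mid i\in N\}$, $d-N=\{d-i\mid i\in N\}$; $M\cong N$ iff $N=j+M$ or $N=j-M$ for some $j\in\mathbb{Z}$; $N$ is reflection-symmetrical if $N=j-N$ for some $j\in\mathbb{Z}$. *)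

theory Defs
  imports Main
begin

text \<open>Configurations over the alphabet 'a are maps int => 'a; a local rule is a
function on words (lists); only its values on words of length |N| matter.\<close>

type_synonym 'a config = "int \<Rightarrow> 'a"
type_synonym 'a gmap = "'a config \<Rightarrow> 'a config"
type_synonym 'a rule = "'a list \<Rightarrow> 'a"

definition CA :: "int set \<Rightarrow> 'a rule \<Rightarrow> 'a gmap" where
  "CA N f = (\<lambda>x i. f (map (\<lambda>j. x (i + j)) (sorted_list_of_set N)))"

definition irreducible :: "int set \<Rightarrow> 'a rule \<Rightarrow> bool" where
  "irreducible N f \<longleftrightarrow> (\<forall>k < card N. \<exists>w a. length w = card N \<and> f (w[k := a]) \<noteq> f w)"

definition perm_rule :: "('a \<Rightarrow> 'a) \<Rightarrow> 'a rule \<Rightarrow> 'a rule" where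
  "perm_rule \<nu> f = (\<lambda>w. \<nu> (f (map (inv \<nu>) w)))"

definition rev_rule :: "'a rule \<Rightarrow> 'a rule" where
  "rev_rule f = (\<lambda>w. f (rev w))"

definition rule_class :: "'a rule \<Rightarrow> 'a rule set" where
  "rule_class f = {perm_rule \<nu> f | \<nu>. bij \<nu>} \<union> {rev_rule (perm_rule \<nu> f) | \<nu>. bij \<nu>}"

definition shift_map :: "int \<Rightarrow> 'a gmap \<Rightarrow> 'a gmap" where
  "shift_map k \<Phi> = (\<lambda>x i. \<Phi> x (i + k))"

definition perm_map :: "('a \<Rightarrow> 'a) \<Rightarrow> 'a gmap \<Rightarrow> 'a gmap" where
  "perm_map \<nu> \<Phi> = (\<lambda>x. \<nu> \<circ> \<Phi> (inv \<nu> \<circ> x))"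

definition refl_config :: "'a config \<Rightarrow> 'a config" where
  "refl_config x = (\<lambda>i. x (- i))"

definition rev_map :: "'a gmap \<Rightarrow> 'a gmap" where
  "rev_map \<Phi> = (\<lambda>x. refl_config (\<Phi> (refl_config x)))"

text \<open>Orbit of a global map under T_A = { sigma^i r^j nu }.\<close>
definition orbit :: "'a gmap \<Rightarrow> 'a gmap set" where
  "orbit \<Phi> = {shift_map i ((if j then rev_map else id) (perm_map \<nu> \<Phi>)) | i j \<nu>. bij \<nu>}"

definition plus_set :: "int \<Rightarrow> int set \<Rightarrow> int set" where
  "plus_set d N = (\<lambda>i. d + i) ` N"

definition minus_set :: "int \<Rightarrow> int set \<Rightarrow> int set" where
  "minus_set d N = (\<lambda>i. d - i) ` N"

definition congr_nbhd :: "int set \<Rightarrow> int set \<Rightarrow> bool" where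
  "congr_nbhd M N \<longleftrightarrow> (\<exists>j. N = plus_set j M \<or> N = minus_set j M)"

definition refl_sym :: "int set \<Rightarrow> bool" where
  "refl_sym N \<longleftrightarrow> (\<exists>j. N = minus_set j N)"

definition rule_eq :: "nat \<Rightarrow> 'a rule \<Rightarrow> 'a rule \<Rightarrow> bool" where
  "rule_eq n f g \<longleftrightarrow> (\<forall>w. length w = n \<longrightarrow> f w = g w)"

end

theory Submission
  imports Defs
begin

text \<open>The generators of \<open>T_A\<close> act on a cellular automaton \<open>\<Phi>^N_f\<close> through its
neighbourhood and rule: the shift translates \<open>N\<close>, a permutation \<open>\<nu>\<close> replaces \<open>f\<close> by
\<open>\<nu>f\<close>, and the reflection replaces \<open>N\<close> by \<open>-N\<close> and reverses \<open>f\<close>. Hence the orbit of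
\<open>\<Phi>^N_f\<close> consists of the maps \<open>\<Phi>^(d+N)_(\<nu>f)\<close> and \<open>\<Phi>^(d-N)_(r\<nu>f)\<close>, that of \<open>\<Phi>^N_(rf)\<close> of
the two complementary families, and the set in (i) is the union of both orbits. If \<open>N\<close> is
reflection-symmetrical or \<open>f\<close> is \<open>r\<nu>\<close>-invariant, \<open>\<Phi>^N_(rf)\<close> lies in the orbit of \<open>\<Phi>^N_f\<close>,
so the two orbits coincide. Conversely, for an irreducible rule the neighbourhood is
determined by the global map (as the set of cells on which the value at cell 0 depends),
and then the rule is determined by neighbourhood and map; so if \<open>\<Phi>^N_(rf)\<close> lies in the
orbit of \<open>\<Phi>^N_f\<close>, either \<open>N = d - N\<close> or \<open>rf = \<nu>f\<close> on words of length \<open>|N|\<close>.\<close>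

lemma sorted_list_of_set_plus_set:
  assumes "finite N"
  shows "sorted_list_of_set (plus_set d N) = map (\<lambda>i. d + i) (sorted_list_of_set N)"
proof -
  have "sorted_wrt (<) (map (\<lambda>i. d + i) (sorted_list_of_set N))"
    by (simp add: sorted_wrt_map)
  moreover have "length (map (\<lambda>i. d + i) (sorted_list_of_set N)) = card (plus_set d N)"
    using assms by (simp add: plus_set_def card_image)
  ultimately show ?thesis
    using assms by (subst sorted_list_of_set_unique[symmetric]) (auto simp: plus_set_def)
qed

lemma sorted_list_of_set_minus_set:
  assumes "finite N"
  shows "sorted_list_of_set (minus_set d N) = rev (map (\<lambda>i. d - i) (sorted_list_of_set N))"
proof -
  have "sorted_wrt (<) (rev (map (\<lambda>i. d - i) (sorted_list_of_set N)))"
    by (simp add: sorted_wrt_map sorted_wrt_rev)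
  moreover have "length (rev (map (\<lambda>i. d - i) (sorted_list_of_set N))) = card (minus_set d N)"
    using assms by (simp add: minus_set_def card_image inj_on_def)
  ultimately show ?thesis
    using assms by (subst sorted_list_of_set_unique[symmetric]) (auto simp: minus_set_def)
qed

lemma plus_set_0 [simp]: "plus_set 0 N = N"
  by (simp add: plus_set_def)

lemma plus_set_plus_set: "plus_set i (plus_set j N) = plus_set (i + j) N"
  by (auto simp: plus_set_def image_image add.assoc)

lemma plus_set_minus_set: "plus_set i (minus_set j N) = minus_set (i + j) N"
  by (auto simp: plus_set_def minus_set_def image_image add_diff_eq)

lemma minus_set_minus_set: "minus_set i (minus_set j N) = plus_set (i - j) N"
  by (auto simp: plus_set_def minus_set_def image_image)

lemma finite_plus_set [simp]: "finite (plus_set d N) \<longleftrightarrow> finite N"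
  by (simp add: plus_set_def finite_image_iff)

lemma finite_minus_set [simp]: "finite (minus_set d N) \<longleftrightarrow> finite N"
  by (simp add: minus_set_def finite_image_iff inj_on_def)

lemma card_plus_set [simp]: "card (plus_set d N) = card N"
  by (simp add: plus_set_def card_image)

lemma card_minus_set [simp]: "card (minus_set d N) = card N"
  by (simp add: minus_set_def card_image inj_on_def)

lemma congr_nbhd_iff: "congr_nbhd M N \<longleftrightarrow> (\<exists>d. M = plus_set d N \<or> M = minus_set d N)"
  unfolding congr_nbhd_def
  by (metis plus_set_plus_set minus_set_minus_set plus_set_0 add.left_inverse diff_self)

lemma perm_rule_comp:
  assumes "bij \<nu>" "bij \<mu>"
  shows "perm_rule \<nu> (perm_rule \<mu> g) = perm_rule (\<nu> \<circ> \<mu>) g"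
  using assms by (simp add: perm_rule_def o_inv_distrib fun_eq_iff)

lemma rev_rule_rev_rule [simp]: "rev_rule (rev_rule g) = g"
  by (simp add: rev_rule_def fun_eq_iff)

lemma rev_rule_perm_rule: "rev_rule (perm_rule \<nu> g) = perm_rule \<nu> (rev_rule g)"
  by (simp add: rev_rule_def perm_rule_def rev_map fun_eq_iff)

lemma shift_map_CA: "finite N \<Longrightarrow> shift_map k (CA N f) = CA (plus_set k N) f"
  by (auto simp: shift_map_def CA_def sorted_list_of_set_plus_set o_def add.assoc intro!: ext)

lemma perm_map_CA: "perm_map \<nu> (CA N f) = CA N (perm_rule \<nu> f)"
  by (auto simp: perm_map_def CA_def perm_rule_def o_def intro!: ext)

lemma rev_map_CA: "finite N \<Longrightarrow> rev_map (CA N f) = CA (minus_set 0 N) (rev_rule f)"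
  by (auto simp: rev_map_def refl_config_def CA_def sorted_list_of_set_minus_set rev_rule_def
      rev_map o_def intro!: ext)

lemma self_in_orbit: "\<Phi> \<in> orbit \<Phi>"
proof -
  have "shift_map 0 (id (perm_map id \<Phi>)) = \<Phi>"
    by (simp add: shift_map_def perm_map_def)
  then show ?thesis
    unfolding orbit_def by (auto intro!: exI[of _ 0] exI[of _ False] exI[of _ id])
qed

lemma orbit_CA:
  assumes "finite N"
  shows "orbit (CA N f) = {CA (plus_set d N) (perm_rule \<nu> f) | d \<nu>. bij \<nu>}
             \<union> {CA (minus_set d N) (rev_rule (perm_rule \<nu> f)) | d \<nu>. bij \<nu>}"
proof -
  have "shift_map d ((if j then rev_map else id) (perm_map \<nu> (CA N f))) =
     (if j then CA (minus_set d N) (rev_rule (perm_rule \<nu> f)) else CA (plus_set d N) (perm_rule \<nu> f))"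
    for d j \<nu>
    using assms by (simp add: perm_map_CA rev_map_CA shift_map_CA plus_set_minus_set)
  then show ?thesis
    unfolding orbit_def by fastforce
qed

lemma orbit_CA_rev_rule:
  assumes "finite N"
  shows "orbit (CA N (rev_rule f)) = {CA (plus_set d N) (rev_rule (perm_rule \<nu> f)) | d \<nu>. bij \<nu>}
             \<union> {CA (minus_set d N) (perm_rule \<nu> f) | d \<nu>. bij \<nu>}"
  using assms by (simp add: orbit_CA rev_rule_perm_rule Un_commute)

lemma orbit_CA_perm_rule:
  assumes "finite N" "bij \<mu>"
  shows "orbit (CA N (perm_rule \<mu> f)) = orbit (CA N f)"
proof -
  \<comment> \<open>\<open>\<nu> \<mapsto> \<nu> \<circ> \<mu>\<close> permutes the bijections.\<close>
  have "{h (perm_rule \<nu> (perm_rule \<mu> f)) d | d \<nu>. bij \<nu>} = {h (perm_rule \<nu> f) d | d \<nu>. bij \<nu>}"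
    for h :: "'a rule \<Rightarrow> int \<Rightarrow> 'a gmap"
  proof (intro set_eqI iffI)
    fix \<Phi> assume "\<Phi> \<in> {h (perm_rule \<nu> (perm_rule \<mu> f)) d | d \<nu>. bij \<nu>}"
    then show "\<Phi> \<in> {h (perm_rule \<nu> f) d | d \<nu>. bij \<nu>}"
      using assms(2) by (auto simp: perm_rule_comp) (blast intro: bij_comp)
  next
    fix \<Phi> assume "\<Phi> \<in> {h (perm_rule \<nu> f) d | d \<nu>. bij \<nu>}"
    then obtain d \<nu> where "bij \<nu>" "\<Phi> = h (perm_rule \<nu> f) d" by blast
    moreover have "perm_rule \<nu> f = perm_rule (\<nu> \<circ> inv \<mu>) (perm_rule \<mu> f)"
      using \<open>bij \<nu>\<close> assms(2)
      by (simp add: perm_rule_comp bij_comp bij_imp_bij_inv comp_assoc bij_is_inj)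
    ultimately show "\<Phi> \<in> {h (perm_rule \<nu> (perm_rule \<mu> f)) d | d \<nu>. bij \<nu>}"
      using assms(2) by (auto intro!: exI[of _ d] exI[of _ "\<nu> \<circ> inv \<mu>"] bij_comp bij_imp_bij_inv)
  qed
  from this[of "\<lambda>g d. CA (plus_set d N) g"] this[of "\<lambda>g d. CA (minus_set d N) (rev_rule g)"]
  show ?thesis
    using assms(1) by (simp add: orbit_CA)
qed

lemma orbit_CA_minus_set:
  assumes "finite N"
  shows "orbit (CA (minus_set j N) (rev_rule f)) = orbit (CA N f)"
proof -
  have "{h (d + c) \<nu> | d \<nu>. bij \<nu>} = {h d \<nu> | d \<nu>. bij \<nu>}" for h :: "int \<Rightarrow> ('a \<Rightarrow> 'a) \<Rightarrow> 'a gmap" and c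
  proof (intro set_eqI iffI)
    fix \<Phi> assume "\<Phi> \<in> {h d \<nu> | d \<nu>. bij \<nu>}"
    then obtain d \<nu> where "bij \<nu>" "\<Phi> = h (d - c + c) \<nu>" by auto
    then show "\<Phi> \<in> {h (d + c) \<nu> | d \<nu>. bij \<nu>}" by blast
  qed auto
  from this[of "\<lambda>d \<nu>. CA (minus_set d N) (rev_rule (perm_rule \<nu> f))" j]
       this[of "\<lambda>d \<nu>. CA (plus_set d N) (perm_rule \<nu> f)" "- j"]
  show ?thesis
    using assms by (simp add: orbit_CA rev_rule_perm_rule[symmetric] plus_set_minus_set
        minus_set_minus_set Un_commute)
qed

lemma orbit_CA_rev_rule_eq_if_refl_sym:
  assumes "finite N" "refl_sym N"
  shows "orbit (CA N (rev_rule f)) = orbit (CA N f)"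
proof -
  obtain j where "N = minus_set j N"
    using assms(2) by (auto simp: refl_sym_def)
  then have "orbit (CA N (rev_rule f)) = orbit (CA (minus_set j N) (rev_rule f))"
    by simp
  then show ?thesis
    using assms(1) by (simp add: orbit_CA_minus_set)
qed

lemma exists_config_map:
  "distinct L \<Longrightarrow> length w = length L \<Longrightarrow> \<exists>x::'a config. map x L = w"
proof (induction L arbitrary: w)
  case (Cons j L)
  then obtain a w' where w: "w = a # w'"
    by (cases w) auto
  with Cons obtain x where "map x L = w'"
    by auto
  with Cons.prems w have "map (x(j := a)) (j # L) = w"
    by (simp add: map_fun_upd)
  then show ?case
    by blast
qed simp

lemma CA_eq_iff_rule_eq: "finite M \<Longrightarrow> CA M g = CA M g' \<longleftrightarrow> rule_eq (card M) g g'"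
proof
  assume "finite M" "CA M g = CA M g'"
  show "rule_eq (card M) g g'"
    unfolding rule_eq_def
  proof (intro allI impI)
    fix w :: "'a list" assume "length w = card M"
    then obtain x :: "'a config" where x: "map x (sorted_list_of_set M) = w"
      using exists_config_map[of "sorted_list_of_set M" w] \<open>finite M\<close> by auto
    have "CA M g x 0 = CA M g' x 0"
      using \<open>CA M g = CA M g'\<close> by simp
    then show "g w = g' w"
      unfolding CA_def using x by simp
  qed
qed (auto simp: CA_def rule_eq_def intro!: ext)

lemma orbit_CA_rev_rule_eq_if_rev_invariant:
  assumes "finite N" "bij \<nu>" "rule_eq (card N) (rev_rule (perm_rule \<nu> f)) f"
  shows "orbit (CA N (rev_rule f)) = orbit (CA N f)"
proof -
  have "CA N f = CA N (perm_rule \<nu> (rev_rule f))"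
    using assms by (simp add: CA_eq_iff_rule_eq rule_eq_def rev_rule_perm_rule)
  then show ?thesis
    using assms(1,2) by (simp add: orbit_CA_perm_rule)
qed

lemma congr_nbhd_rule_class_eq_orbit_Un:
  assumes "finite N"
  shows "{CA M g | M g. congr_nbhd M N \<and> g \<in> rule_class f} =
    orbit (CA N f) \<union> orbit (CA N (rev_rule f))"
  unfolding orbit_CA[OF assms] congr_nbhd_iff rule_class_def
  by (simp add: rev_rule_perm_rule[symmetric]) blast

lemma irreducible_card_cong: "card M = card N \<Longrightarrow> irreducible M f \<longleftrightarrow> irreducible N f"
  by (simp add: irreducible_def)

lemma irreducible_perm_rule:
  assumes "bij \<nu>" "irreducible N f"
  shows "irreducible N (perm_rule \<nu> f)"
  unfolding irreducible_def
proof (intro allI impI)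
  fix k assume "k < card N"
  then obtain w a where w: "length w = card N" "f (w[k := a]) \<noteq> f w"
    using assms(2) unfolding irreducible_def by blast
  have "inv \<nu> \<circ> \<nu> = id"
    using assms(1) by (simp add: bij_is_inj)
  then have "perm_rule \<nu> f ((map \<nu> w)[k := \<nu> a]) \<noteq> perm_rule \<nu> f (map \<nu> w)"
    using w(2) bij_is_inj[OF assms(1)] by (simp add: perm_rule_def map_update inj_eq)
  then show "\<exists>w a. length w = card N \<and> perm_rule \<nu> f (w[k := a]) \<noteq> perm_rule \<nu> f w"
    using w(1) by (metis length_map)
qed

lemma irreducible_rev_rule:
  assumes "irreducible N f"
  shows "irreducible N (rev_rule f)"
  unfolding irreducible_def
proof (intro allI impI)
  fix k assume k: "k < card N"
  then have "card N - k - 1 < card N"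
    by simp
  then obtain w a where w: "length w = card N" "f (w[card N - k - 1 := a]) \<noteq> f w"
    using assms unfolding irreducible_def by blast
  have "rev ((rev w)[k := a]) = w[card N - k - 1 := a]"
    using w(1) k by (simp add: rev_update)
  then have "rev_rule f ((rev w)[k := a]) \<noteq> rev_rule f (rev w)"
    using w(2) by (simp add: rev_rule_def)
  then show "\<exists>w a. length w = card N \<and> rev_rule f (w[k := a]) \<noteq> rev_rule f w"
    using w(1) by (metis length_rev)
qed

lemma CA_at_0: "CA M g x 0 = g (map x (sorted_list_of_set M))"
  by (simp add: CA_def)

definition essential_nbhd :: "'a gmap \<Rightarrow> int set" where
  "essential_nbhd \<Phi> = {i. \<exists>x a. \<Phi> (x(i := a)) 0 \<noteq> \<Phi> x 0}"

lemma essential_nbhd_CA: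
  assumes "finite M" "irreducible M g"
  shows "essential_nbhd (CA M g) = M"
proof
  let ?L = "sorted_list_of_set M"
  show "essential_nbhd (CA M g) \<subseteq> M"
  proof
    fix i assume "i \<in> essential_nbhd (CA M g)"
    then obtain x a where "g (map (x(i := a)) ?L) \<noteq> g (map x ?L)"
      by (auto simp: essential_nbhd_def CA_at_0)
    then have "map (x(i := a)) ?L \<noteq> map x ?L"
      by metis
    then show "i \<in> M"
      using assms(1) by (metis map_fun_upd set_sorted_list_of_set)
  qed
  show "M \<subseteq> essential_nbhd (CA M g)"
  proof
    fix i assume "i \<in> M"
    have L: "distinct ?L" "length ?L = card M" "set ?L = M"
      using assms(1) by auto
    then obtain k where k: "k < card M" "?L ! k = i"
      using \<open>i \<in> M\<close> by (metis in_set_conv_nth)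
    obtain w a where w: "length w = card M" "g (w[k := a]) \<noteq> g w"
      using assms(2) k(1) unfolding irreducible_def by blast
    obtain x :: "'a config" where x: "map x ?L = w"
      using exists_config_map L w(1) by metis
    have "map (x(i := a)) ?L = w[k := a]"
      using L k x by (auto intro!: nth_equalityI simp: nth_eq_iff_index_eq nth_list_update)
    then have "CA M g (x(i := a)) 0 \<noteq> CA M g x 0"
      using w(2) x by (simp add: CA_at_0)
    then show "i \<in> essential_nbhd (CA M g)"
      unfolding essential_nbhd_def by blast
  qed
qed

lemma CA_eq_imp_nbhd_eq:
  assumes "finite M" "irreducible M g" "finite M'" "irreducible M' g'" "CA M g = CA M' g'"
  shows "M = M'"
  using assms by (metis essential_nbhd_CA)

lemma rule_eq_rev_rule_iff: "rule_eq n (rev_rule g) h \<longleftrightarrow> rule_eq n g (rev_rule h)"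
  unfolding rule_eq_def rev_rule_def by (metis length_rev rev_rev_ident)

lemma rev_invariant_or_refl_sym_if_rev_rule_in_orbit:
  assumes fin: "finite N" and irr: "irreducible N f" and "CA N (rev_rule f) \<in> orbit (CA N f)"
  shows "refl_sym N \<or> (\<exists>\<nu>. bij \<nu> \<and> rule_eq (card N) (rev_rule (perm_rule \<nu> f)) f)"
proof -
  have irr_rev: "irreducible N (rev_rule f)"
    using irr by (rule irreducible_rev_rule)
  obtain d \<nu> where \<nu>: "bij \<nu>" and cases:
    "CA N (rev_rule f) = CA (plus_set d N) (perm_rule \<nu> f) \<or>
     CA N (rev_rule f) = CA (minus_set d N) (rev_rule (perm_rule \<nu> f))"
    using assms(3) unfolding orbit_CA[OF fin] by blast
  from cases show ?thesis
  proof
    assume eq: "CA N (rev_rule f) = CA (plus_set d N) (perm_rule \<nu> f)"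
    have "irreducible (plus_set d N) (perm_rule \<nu> f)"
      using irreducible_card_cong[OF card_plus_set] irreducible_perm_rule[OF \<nu> irr] by blast
    then have "plus_set d N = N"
      using CA_eq_imp_nbhd_eq fin irr_rev eq by (metis finite_plus_set)
    then have "rule_eq (card N) (rev_rule f) (perm_rule \<nu> f)"
      using eq fin by (simp add: CA_eq_iff_rule_eq)
    then have "rule_eq (card N) f (rev_rule (perm_rule \<nu> f))"
      by (simp add: rule_eq_rev_rule_iff)
    then have "rule_eq (card N) (rev_rule (perm_rule \<nu> f)) f"
      by (simp add: rule_eq_def)
    then show ?thesis
      using \<nu> by blast
  next
    assume eq: "CA N (rev_rule f) = CA (minus_set d N) (rev_rule (perm_rule \<nu> f))"
    have "irreducible (minus_set d N) (rev_rule (perm_rule \<nu> f))"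
      using irreducible_card_cong[OF card_minus_set] irreducible_rev_rule irreducible_perm_rule[OF \<nu> irr]
      by blast
    then have "minus_set d N = N"
      using CA_eq_imp_nbhd_eq fin irr_rev eq by (metis finite_minus_set)
    then show ?thesis
      unfolding refl_sym_def by metis
  qed
qed

theorem proposition8:
  fixes N :: "int set" and f :: "'a::finite list \<Rightarrow> 'a"
  assumes "finite N" and "irreducible N f"
  shows "((refl_sym N \<or> (\<exists>\<nu>. bij \<nu> \<and> rule_eq (card N) (rev_rule (perm_rule \<nu> f)) f)) \<longrightarrow>
           orbit (CA N f) = {CA M g | M g. congr_nbhd M N \<and> g \<in> rule_class f}) \<and>
         (\<not> (refl_sym N \<or> (\<exists>\<nu>. bij \<nu> \<and> rule_eq (card N) (rev_rule (perm_rule \<nu> f)) f)) \<longrightarrow>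
           orbit (CA N f) =
             {CA (plus_set d N) (perm_rule \<nu> f) | d \<nu>. bij \<nu>}
             \<union> {CA (minus_set d N) (rev_rule (perm_rule \<nu> f)) | d \<nu>. bij \<nu>}
         \<and> orbit (CA N (rev_rule f)) =
             {CA (plus_set d N) (rev_rule (perm_rule \<nu> f)) | d \<nu>. bij \<nu>}
             \<union> {CA (minus_set d N) (perm_rule \<nu> f) | d \<nu>. bij \<nu>}
         \<and> orbit (CA N f) \<noteq> orbit (CA N (rev_rule f)))"
proof (intro conjI impI)
  assume "refl_sym N \<or> (\<exists>\<nu>. bij \<nu> \<and> rule_eq (card N) (rev_rule (perm_rule \<nu> f)) f)"
  then have "orbit (CA N (rev_rule f)) = orbit (CA N f)"
    using assms(1) orbit_CA_rev_rule_eq_if_refl_sym orbit_CA_rev_rule_eq_if_rev_invariant by blast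
  then show "orbit (CA N f) = {CA M g | M g. congr_nbhd M N \<and> g \<in> rule_class f}"
    using congr_nbhd_rule_class_eq_orbit_Un[OF assms(1), of f] by simp
next
  assume asym: "\<not> (refl_sym N \<or> (\<exists>\<nu>. bij \<nu> \<and> rule_eq (card N) (rev_rule (perm_rule \<nu> f)) f))"
  show "orbit (CA N f) =
      {CA (plus_set d N) (perm_rule \<nu> f) | d \<nu>. bij \<nu>}
      \<union> {CA (minus_set d N) (rev_rule (perm_rule \<nu> f)) | d \<nu>. bij \<nu>}"
    using assms(1) by (rule orbit_CA)
  show "orbit (CA N (rev_rule f)) =
      {CA (plus_set d N) (rev_rule (perm_rule \<nu> f)) | d \<nu>. bij \<nu>}
      \<union> {CA (minus_set d N) (perm_rule \<nu> f) | d \<nu>. bij \<nu>}"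
    using assms(1) by (rule orbit_CA_rev_rule)
  show "orbit (CA N f) \<noteq> orbit (CA N (rev_rule f))"
  proof
    assume "orbit (CA N f) = orbit (CA N (rev_rule f))"
    then have "CA N (rev_rule f) \<in> orbit (CA N f)"
      using self_in_orbit by metis
    then show False
      using rev_invariant_or_refl_sym_if_rev_rule_in_orbit[OF assms] asym by blast
  qed
qed

end
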